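(* Consider a $k$-stage screening process over a finite set $\mathcal X$ of groups in which all tests are minimally effective, i.e. $\tau^i_{X1}>\tau^i_{X0}\ge0$ for all $X\in\mathcal X$, $i\in[k]$. Among promotion policies satisfying Equal Opportunity (for which precision is defined), the maximum interview efficiency is attained by the Opportunity Ratio policy, and it equals $$\frac{\|q\|_1}{\|q\|_1+\sum_{X\in\mathcal X}u_X\prod_{i=1}^k(\tau^i_{X0}/\tau^i_{X1})}.$$
   Context: Each group $X$ has base rate $q_X$ (probability a member is qualified), $u_X=1-q_X$, and $\|q\|_1=\sum_Xq_X$. At stage $i$, $\tau^i_{X1}$ (resp. $\tau^i_{X0}$) is the probability a qualified (resp. unqualified) member of group $X$ passes test $i$. A policy specifies $\pi^i_{X1},\pi^i_{X0}\in[0,1]$, the probabilities that a member of $X$ who passes (resp. fails) test $i$ is promoted to stage $i+1$ (promotion depends only on group and current test outcome). Let $M_X=\prod_{i=1}^k(\tau^i_{X1}\pi^i_{X1}+(1-\tau^i_{X1})\pi^i_{X0})$ and $N_X=\prod_{i=1}^k(\tau^i_{X0}\pi^i_{X1}+(1-\tau^i_{X0})\pi^i_{X0})$ (probabilities that a qualified, resp. unqualified, member of $X$ reaches the final interview). The policy satisfies Equal Opportunity if $M_X$ is the same for all $X$. Interview efficiency (precision) is $\frac{\sum_Xq_XM_X}{\sum_X(q_XM_X+u_XN_X)}$, defined when the denominator is positive. Opportunity Ratio policy: let $X^*=\arg\min_X\prod_j\tau^j_{X1}$ and $\rho_X=\prod_{j=1}^k\tau^j_{X^*1}/\tau^j_{X1}$;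 set $\pi^1_{X1}=\rho_X$, $\pi^1_{X0}=0$, and $\pi^i_{X1}=1,\pi^i_{X0}=0$ for $i\ge2$. *)

theory Defs
  imports Complex_Main
begin

text \<open>Stages are indexed by 1..k; groups range over a finite set G.
  tau1 i X (resp. tau0 i X): probability that a qualified (resp. unqualified)
  member of group X passes test i.  pi1 i X (resp. pi0 i X): probability that a
  member of X who passes (resp. fails) test i is promoted to stage i+1.\<close>

definition reach_prob :: "nat \<Rightarrow> (nat \<Rightarrow> 'g \<Rightarrow> real) \<Rightarrow> (nat \<Rightarrow> 'g \<Rightarrow> real)
    \<Rightarrow> (nat \<Rightarrow> 'g \<Rightarrow> real) \<Rightarrow> 'g \<Rightarrow> real" where
  "reach_prob k tau pi1 pi0 X =
     (\<Prod>i\<in>{1..k}. tau i X * pi1 i X + (1 - tau i X) * pi0 i X)"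

definition valid_policy :: "'g set \<Rightarrow> nat \<Rightarrow> (nat \<Rightarrow> 'g \<Rightarrow> real) \<Rightarrow> (nat \<Rightarrow> 'g \<Rightarrow> real) \<Rightarrow> bool" where
  "valid_policy G k pi1 pi0 \<longleftrightarrow>
     (\<forall>i\<in>{1..k}. \<forall>X\<in>G. 0 \<le> pi1 i X \<and> pi1 i X \<le> 1 \<and> 0 \<le> pi0 i X \<and> pi0 i X \<le> 1)"

definition equal_opportunity :: "'g set \<Rightarrow> nat \<Rightarrow> (nat \<Rightarrow> 'g \<Rightarrow> real)
    \<Rightarrow> (nat \<Rightarrow> 'g \<Rightarrow> real) \<Rightarrow> (nat \<Rightarrow> 'g \<Rightarrow> real) \<Rightarrow> bool" where
  "equal_opportunity G k tau1 pi1 pi0 \<longleftrightarrow>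
     (\<forall>X\<in>G. \<forall>Y\<in>G. reach_prob k tau1 pi1 pi0 X = reach_prob k tau1 pi1 pi0 Y)"

definition efficiency_denom :: "'g set \<Rightarrow> nat \<Rightarrow> ('g \<Rightarrow> real) \<Rightarrow> (nat \<Rightarrow> 'g \<Rightarrow> real)
    \<Rightarrow> (nat \<Rightarrow> 'g \<Rightarrow> real) \<Rightarrow> (nat \<Rightarrow> 'g \<Rightarrow> real) \<Rightarrow> (nat \<Rightarrow> 'g \<Rightarrow> real) \<Rightarrow> real" where
  "efficiency_denom G k q tau1 tau0 pi1 pi0 =
     (\<Sum>X\<in>G. q X * reach_prob k tau1 pi1 pi0 X + (1 - q X) * reach_prob k tau0 pi1 pi0 X)"

text \<open>Interview efficiency (precision); only meaningful when the denominator is positive.\<close>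
definition efficiency :: "'g set \<Rightarrow> nat \<Rightarrow> ('g \<Rightarrow> real) \<Rightarrow> (nat \<Rightarrow> 'g \<Rightarrow> real)
    \<Rightarrow> (nat \<Rightarrow> 'g \<Rightarrow> real) \<Rightarrow> (nat \<Rightarrow> 'g \<Rightarrow> real) \<Rightarrow> (nat \<Rightarrow> 'g \<Rightarrow> real) \<Rightarrow> real" where
  "efficiency G k q tau1 tau0 pi1 pi0 =
     (\<Sum>X\<in>G. q X * reach_prob k tau1 pi1 pi0 X) / efficiency_denom G k q tau1 tau0 pi1 pi0"

definition OR_rho :: "'g set \<Rightarrow> nat \<Rightarrow> (nat \<Rightarrow> 'g \<Rightarrow> real) \<Rightarrow> 'g \<Rightarrow> real" where
  "OR_rho G k tau1 X =
     Min ((\<lambda>Y. \<Prod>j\<in>{1..k}. tau1 j Y) ` G) / (\<Prod>j\<in>{1..k}. tau1 j X)"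

definition OR_pi1 :: "'g set \<Rightarrow> nat \<Rightarrow> (nat \<Rightarrow> 'g \<Rightarrow> real) \<Rightarrow> nat \<Rightarrow> 'g \<Rightarrow> real" where
  "OR_pi1 G k tau1 i X = (if i = 1 then OR_rho G k tau1 X else 1)"

definition OR_pi0 :: "nat \<Rightarrow> 'g \<Rightarrow> real" where
  "OR_pi0 i X = 0"

end

theory Submission
  imports Defs
begin

text \<open>At stage \<open>i\<close> an unqualified member of \<open>X\<close> is promoted with probability
  \<open>\<tau>\<^sub>0 \<pi>\<^sub>1 + (1 - \<tau>\<^sub>0) \<pi>\<^sub>0\<close>; scaling the qualified probability by \<open>\<tau>\<^sub>0 / \<tau>\<^sub>1\<close> reproduces the
  first term and shrinks the second, since \<open>(\<tau>\<^sub>0 / \<tau>\<^sub>1) (1 - \<tau>\<^sub>1) \<le> 1 - \<tau>\<^sub>0\<close>.  Multiplying over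
  the stages gives \<open>N\<^sub>X \<ge> r\<^sub>X M\<^sub>X\<close> for every policy, where \<open>r\<^sub>X = \<Prod>\<^sub>i \<tau>\<^sup>i\<^sub>X\<^sub>0 / \<tau>\<^sup>i\<^sub>X\<^sub>1\<close>, with
  equality when \<open>\<pi>\<^sub>0 = 0\<close>.  Under Equal Opportunity all \<open>M\<^sub>X\<close> equal one \<open>M\<close>, so the precision
  \<open>M \<parallel>q\<parallel>\<^sub>1 / (M \<parallel>q\<parallel>\<^sub>1 + \<Sum>\<^sub>X u\<^sub>X N\<^sub>X)\<close> is at most \<open>\<parallel>q\<parallel>\<^sub>1 / (\<parallel>q\<parallel>\<^sub>1 + \<Sum>\<^sub>X u\<^sub>X r\<^sub>X)\<close>.  The
  Opportunity Ratio policy never promotes on failure and gives every group the same positive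
  \<open>M\<close>, namely the smallest all-pass probability, so it attains this bound.\<close>

definition minimally_effective :: "'g set \<Rightarrow> nat \<Rightarrow> (nat \<Rightarrow> 'g \<Rightarrow> real) \<Rightarrow> (nat \<Rightarrow> 'g \<Rightarrow> real) \<Rightarrow> bool"
  where "minimally_effective G k tau1 tau0 \<longleftrightarrow>
    (\<forall>i\<in>{1..k}. \<forall>X\<in>G. 0 \<le> tau0 i X \<and> tau0 i X < tau1 i X \<and> tau1 i X \<le> 1)"

lemma stage_prob_scaled_le:
  fixes t0 t1 p1 p0 :: real
  assumes "0 < t1" "t0 \<le> t1" "0 \<le> p0"
  shows "t0 / t1 * (t1 * p1 + (1 - t1) * p0) \<le> t0 * p1 + (1 - t0) * p0"
proof -
  have "t0 / t1 * (1 - t1) \<le> 1 - t0"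
    using assms by (simp add: field_simps)
  then have "t0 / t1 * (1 - t1) * p0 \<le> (1 - t0) * p0"
    using \<open>0 \<le> p0\<close> by (rule mult_right_mono)
  moreover have "t0 / t1 * (t1 * p1 + (1 - t1) * p0) = t0 * p1 + t0 / t1 * (1 - t1) * p0"
    using \<open>0 < t1\<close> by (simp add: field_simps)
  ultimately show ?thesis
    by simp
qed

lemma reach_prob_nonneg:
  assumes "\<forall>i\<in>{1..k}. 0 \<le> tau i X \<and> tau i X \<le> 1 \<and> 0 \<le> pi1 i X \<and> 0 \<le> pi0 i X"
  shows "0 \<le> reach_prob k tau pi1 pi0 X"
  unfolding reach_prob_def using assms by (intro prod_nonneg) auto

lemma reach_prob_ratio_le:
  assumes "minimally_effective G k tau1 tau0" "valid_policy G k pi1 pi0" "X \<in> G"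
  shows "(\<Prod>i\<in>{1..k}. tau0 i X / tau1 i X) * reach_prob k tau1 pi1 pi0 X
    \<le> reach_prob k tau0 pi1 pi0 X"
proof -
  have "(\<Prod>i\<in>{1..k}. tau0 i X / tau1 i X) * reach_prob k tau1 pi1 pi0 X
      = (\<Prod>i\<in>{1..k}. tau0 i X / tau1 i X * (tau1 i X * pi1 i X + (1 - tau1 i X) * pi0 i X))"
    unfolding reach_prob_def by (rule prod.distrib[symmetric])
  also have "\<dots> \<le> reach_prob k tau0 pi1 pi0 X"
    unfolding reach_prob_def
  proof (rule prod_mono, rule conjI)
    fix i assume "i \<in> {1..k}"
    then have tau: "0 \<le> tau0 i X" "tau0 i X < tau1 i X" "tau1 i X \<le> 1"
      and pi: "0 \<le> pi1 i X" "0 \<le> pi0 i X"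
      using assms unfolding minimally_effective_def valid_policy_def by auto
    show "0 \<le> tau0 i X / tau1 i X * (tau1 i X * pi1 i X + (1 - tau1 i X) * pi0 i X)"
      using tau pi by simp
    show "tau0 i X / tau1 i X * (tau1 i X * pi1 i X + (1 - tau1 i X) * pi0 i X)
        \<le> tau0 i X * pi1 i X + (1 - tau0 i X) * pi0 i X"
      using tau pi by (intro stage_prob_scaled_le) auto
  qed
  finally show ?thesis .
qed

lemma scaled_precision_le:
  fixes M Q S B :: real
  assumes "0 \<le> M" "0 < Q" "0 \<le> S" "M * S \<le> B"
  shows "M * Q / (M * Q + B) \<le> Q / (Q + S)"
proof (cases "M = 0")
  case True
  then show ?thesis
    using assms by simp
next
  case False
  then have "0 < M"
    using assms(1) by simp
  then have "M * Q / (M * Q + B) \<le> M * Q / (M * Q + M * S)"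
    using assms by (intro frac_le) (simp_all add: add_pos_nonneg)
  also have "\<dots> = Q / (Q + S)"
    using \<open>0 < M\<close> by (simp add: distrib_left[symmetric])
  finally show ?thesis .
qed

lemma efficiency_le_of_equal_opportunity:
  assumes "\<forall>X\<in>G. 0 \<le> q X \<and> q X \<le> 1" "0 < (\<Sum>X\<in>G. q X)"
    and "minimally_effective G k tau1 tau0"
    and "valid_policy G k pi1 pi0" "equal_opportunity G k tau1 pi1 pi0"
  shows "efficiency G k q tau1 tau0 pi1 pi0
    \<le> (\<Sum>X\<in>G. q X) / ((\<Sum>X\<in>G. q X) + (\<Sum>X\<in>G. (1 - q X) * (\<Prod>i\<in>{1..k}. tau0 i X / tau1 i X)))"
proof -
  obtain X0 where "X0 \<in> G"
    using assms(2) by fastforce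
  define M where "M = reach_prob k tau1 pi1 pi0 X0"
  have M: "reach_prob k tau1 pi1 pi0 X = M" if "X \<in> G" for X
    using assms(5) that \<open>X0 \<in> G\<close> unfolding equal_opportunity_def M_def by blast
  have "0 \<le> M"
    unfolding M_def using assms(3,4) \<open>X0 \<in> G\<close>
    by (intro reach_prob_nonneg) (force simp: minimally_effective_def valid_policy_def)
  have ratio_nonneg: "0 \<le> (\<Prod>i\<in>{1..k}. tau0 i X / tau1 i X)" if "X \<in> G" for X
    using assms(3) that unfolding minimally_effective_def by (intro prod_nonneg) force
  have num: "(\<Sum>X\<in>G. q X * reach_prob k tau1 pi1 pi0 X) = M * (\<Sum>X\<in>G. q X)"
    by (simp add: M sum_distrib_left mult.commute)
  have "M * (\<Sum>X\<in>G. (1 - q X) * (\<Prod>i\<in>{1..k}. tau0 i X / tau1 i X))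
      \<le> (\<Sum>X\<in>G. (1 - q X) * reach_prob k tau0 pi1 pi0 X)"
    unfolding sum_distrib_left
  proof (rule sum_mono)
    fix X assume "X \<in> G"
    have "M * ((1 - q X) * (\<Prod>i\<in>{1..k}. tau0 i X / tau1 i X))
        = (1 - q X) * ((\<Prod>i\<in>{1..k}. tau0 i X / tau1 i X) * reach_prob k tau1 pi1 pi0 X)"
      using M[OF \<open>X \<in> G\<close>] by simp
    also have "\<dots> \<le> (1 - q X) * reach_prob k tau0 pi1 pi0 X"
      using assms(1,3,4) \<open>X \<in> G\<close> by (intro mult_left_mono reach_prob_ratio_le) auto
    finally show "M * ((1 - q X) * (\<Prod>i\<in>{1..k}. tau0 i X / tau1 i X))
        \<le> (1 - q X) * reach_prob k tau0 pi1 pi0 X" .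
  qed
  moreover have "efficiency G k q tau1 tau0 pi1 pi0
      = M * (\<Sum>X\<in>G. q X) / (M * (\<Sum>X\<in>G. q X) + (\<Sum>X\<in>G. (1 - q X) * reach_prob k tau0 pi1 pi0 X))"
    unfolding efficiency_def efficiency_denom_def by (simp add: sum.distrib num[symmetric])
  ultimately show ?thesis
    using \<open>0 \<le> M\<close> assms(1,2) ratio_nonneg
    by (auto intro!: scaled_precision_le sum_nonneg mult_nonneg_nonneg)
qed

lemma reach_prob_OR:
  assumes "X \<in> G"
  shows "reach_prob k tau (OR_pi1 G k tau1) OR_pi0 X = (\<Prod>j\<in>{1..k}. tau j X) * OR_rho G k tau1 X"
proof (cases "k = 0")
  case True
  then have "OR_rho G k tau1 X = 1"
    using assms unfolding OR_rho_def by (simp add: image_constant)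
  then show ?thesis
    using True unfolding reach_prob_def by simp
next
  case False
  have "reach_prob k tau (OR_pi1 G k tau1) OR_pi0 X
      = (\<Prod>i\<in>{1..k}. tau i X * (if i = 1 then OR_rho G k tau1 X else 1))"
    unfolding reach_prob_def OR_pi1_def OR_pi0_def by (intro prod.cong) auto
  also have "\<dots> = (\<Prod>j\<in>{1..k}. tau j X) * (\<Prod>i\<in>{1..k}. if i = 1 then OR_rho G k tau1 X else 1)"
    by (rule prod.distrib)
  also have "(\<Prod>i\<in>{1..k}. if i = 1 then OR_rho G k tau1 X else 1) = OR_rho G k tau1 X"
    using False by (subst prod.delta) auto
  finally show ?thesis .
qed

context
  fixes G :: "'g set" and k :: nat and tau1 tau0 :: "nat \<Rightarrow> 'g \<Rightarrow> real"
  assumes finite: "finite G" and nonempty: "G \<noteq> {}"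
    and effective: "minimally_effective G k tau1 tau0"
begin

private abbreviation min_pass :: real
  where "min_pass \<equiv> Min ((\<lambda>Y. \<Prod>j\<in>{1..k}. tau1 j Y) ` G)"

private lemma pass_prob_pos: "X \<in> G \<Longrightarrow> 0 < (\<Prod>j\<in>{1..k}. tau1 j X)"
  using effective unfolding minimally_effective_def by (intro prod_pos) force

private lemma min_pass_pos: "0 < min_pass"
  using finite nonempty pass_prob_pos by (subst Min_gr_iff) auto

lemma reach_prob_OR_qualified:
  "X \<in> G \<Longrightarrow> reach_prob k tau1 (OR_pi1 G k tau1) OR_pi0 X = min_pass"
  using pass_prob_pos[of X] by (simp add: reach_prob_OR OR_rho_def del: prod_zero_iff)

lemma reach_prob_OR_unqualified:
  "X \<in> G \<Longrightarrow> reach_prob k tau0 (OR_pi1 G k tau1) OR_pi0 X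
    = min_pass * (\<Prod>i\<in>{1..k}. tau0 i X / tau1 i X)"
  by (simp add: reach_prob_OR OR_rho_def prod_dividef)

lemma valid_policy_OR: "valid_policy G k (OR_pi1 G k tau1) OR_pi0"
  unfolding valid_policy_def OR_pi1_def OR_pi0_def OR_rho_def
  using finite min_pass_pos pass_prob_pos by (auto simp: less_imp_le)

lemma equal_opportunity_OR: "equal_opportunity G k tau1 (OR_pi1 G k tau1) OR_pi0"
  unfolding equal_opportunity_def by (simp add: reach_prob_OR_qualified)

lemma efficiency_OR:
  assumes "0 < (\<Sum>X\<in>G. q X)" "\<forall>X\<in>G. q X \<le> 1"
  shows "0 < efficiency_denom G k q tau1 tau0 (OR_pi1 G k tau1) OR_pi0"
    and "efficiency G k q tau1 tau0 (OR_pi1 G k tau1) OR_pi0 =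
      (\<Sum>X\<in>G. q X) / ((\<Sum>X\<in>G. q X) + (\<Sum>X\<in>G. (1 - q X) * (\<Prod>i\<in>{1..k}. tau0 i X / tau1 i X)))"
proof -
  let ?S = "\<Sum>X\<in>G. (1 - q X) * (\<Prod>i\<in>{1..k}. tau0 i X / tau1 i X)"
  have num: "(\<Sum>X\<in>G. q X * reach_prob k tau1 (OR_pi1 G k tau1) OR_pi0 X) = (\<Sum>X\<in>G. q X) * min_pass"
    by (simp add: reach_prob_OR_qualified sum_distrib_right cong: sum.cong)
  have den: "efficiency_denom G k q tau1 tau0 (OR_pi1 G k tau1) OR_pi0
      = min_pass * ((\<Sum>X\<in>G. q X) + ?S)"
  proof -
    have "efficiency_denom G k q tau1 tau0 (OR_pi1 G k tau1) OR_pi0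
        = (\<Sum>X\<in>G. min_pass * q X + min_pass * ((1 - q X) * (\<Prod>i\<in>{1..k}. tau0 i X / tau1 i X)))"
      unfolding efficiency_denom_def
      by (intro sum.cong) (simp_all add: reach_prob_OR_qualified reach_prob_OR_unqualified)
    then show ?thesis
      by (simp add: sum.distrib sum_distrib_left distrib_left)
  qed
  have "0 \<le> ?S"
    using assms(2) effective unfolding minimally_effective_def
    by (intro sum_nonneg mult_nonneg_nonneg prod_nonneg) force+
  then show "0 < efficiency_denom G k q tau1 tau0 (OR_pi1 G k tau1) OR_pi0"
    unfolding den using assms(1) min_pass_pos by simp
  show "efficiency G k q tau1 tau0 (OR_pi1 G k tau1) OR_pi0 = (\<Sum>X\<in>G. q X) / ((\<Sum>X\<in>G. q X) + ?S)"
    unfolding efficiency_def num den using min_pass_pos by simp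
qed

end

theorem mainTheorem11:
  fixes G :: "'g set" and k :: nat and q :: "'g \<Rightarrow> real"
    and tau1 tau0 :: "nat \<Rightarrow> 'g \<Rightarrow> real"
  assumes "finite G"
    and "\<forall>X\<in>G. 0 \<le> q X \<and> q X \<le> 1"
    and "\<exists>X\<in>G. 0 < q X"
    and "\<forall>i\<in>{1..k}. \<forall>X\<in>G. 0 \<le> tau0 i X \<and> tau0 i X < tau1 i X \<and> tau1 i X \<le> 1"
  shows "valid_policy G k (OR_pi1 G k tau1) OR_pi0
    \<and> equal_opportunity G k tau1 (OR_pi1 G k tau1) OR_pi0
    \<and> 0 < efficiency_denom G k q tau1 tau0 (OR_pi1 G k tau1) OR_pi0
    \<and> efficiency G k q tau1 tau0 (OR_pi1 G k tau1) OR_pi0 =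
        (\<Sum>X\<in>G. q X) / ((\<Sum>X\<in>G. q X) + (\<Sum>X\<in>G. (1 - q X) * (\<Prod>i\<in>{1..k}. tau0 i X / tau1 i X)))
    \<and> (\<forall>pi1 pi0. valid_policy G k pi1 pi0 \<and> equal_opportunity G k tau1 pi1 pi0
          \<and> 0 < efficiency_denom G k q tau1 tau0 pi1 pi0
        \<longrightarrow> efficiency G k q tau1 tau0 pi1 pi0
            \<le> efficiency G k q tau1 tau0 (OR_pi1 G k tau1) OR_pi0)"
proof -
  have effective: "minimally_effective G k tau1 tau0"
    using assms(4) unfolding minimally_effective_def .
  obtain X where "X \<in> G" "0 < q X"
    using assms(3) by blast
  then have "G \<noteq> {}" and Q_pos: "0 < (\<Sum>X\<in>G. q X)"
    using assms(1,2) by (auto intro!: sum_pos2)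
  note OR = valid_policy_OR equal_opportunity_OR efficiency_OR
  show ?thesis
    using OR[OF assms(1) \<open>G \<noteq> {}\<close> effective] Q_pos assms(2)
      efficiency_le_of_equal_opportunity[OF assms(2) Q_pos effective]
    by auto
qed

end
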